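(* Let $\mathcal{X}$ be an input space, $\mathcal{Y}=\{1,\dots,C\}$ a finite label set, and $\mathcal{D}$ a distribution on $\mathcal{X}\times\mathcal{Y}$; probabilities and expectations are over $(x,y)\sim\mathcal{D}$. Let $\mathcal{F},\mathcal{G}$ be classification models with differentiable model-dependent losses $\ell_{\mathcal{F}},\ell_{\mathcal{G}}:\mathcal{X}\times\mathcal{Y}\to\mathbb{R}_{\ge0}$ such that $\mathcal{F}(x)=\arg\min_y\ell_{\mathcal{F}}(x,y)$, $\mathcal{G}(x)=\arg\min_y\ell_{\mathcal{G}}(x,y)$. Assume both are $\beta$-smooth with gradient magnitude bounded by $B$: $\|\nabla_x\ell_{\mathcal{F}}(x,y)\|\le B$ and $\|\nabla_x\ell_{\mathcal{G}}(x,y)\|\le B$ for all $x\in\mathcal{X},y\in\mathcal{Y}$. Let $\mathcal{A}_T$ be an $(\alpha,\mathcal{F})$-effective targeted attack with perturbation ball $\|\delta\|_2\le\epsilon$ and target label $y_t\in\mathcal{Y}$. Then $$\Pr\big(T_r(\mathcal{F},\mathcal{G},x,y_t)=1\big)\le\frac{\xi_{\mathcal{F}}+\xi_{\mathcal{G}}}{\ell_{\min}-\epsilon B\left(1+\sqrt{\frac{1+\overline{\mathcal{S}}(\ell_{\mathcal{F}},\ell_{\mathcal{G}})}{2}}\right)-\beta\epsilon^2},\qquad \ell_{\min}=\min_{x\in\mathcal{X}}\big(\ell_{\mathcal{F}}(x,y_t),\ell_{\mathcal{G}}(x,y_t)\big),$$ where $\xi_{\mathcal{F}},\xi_{\mathcal{G}}$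 are the empirical risks of $\mathcal{F}$ and $\mathcal{G}$.
   Context: Empirical risk: $\xi_{\mathcal{F}}=\mathbb{E}[\ell_{\mathcal{F}}(x,y)]$ (similarly $\xi_{\mathcal{G}}$). A model $\mathcal{F}$ is $\beta$-smooth if $\sup_{x_1,x_2\in\mathcal{X},y\in\mathcal{Y}}\frac{\|\nabla_x\ell_{\mathcal{F}}(x_1,y)-\nabla_x\ell_{\mathcal{F}}(x_2,y)\|_2}{\|x_1-x_2\|_2}\le\beta$. A targeted attack with target $y_t$ maps $x$ to $\mathcal{A}_T(x)=x+\delta$ with $\|\delta\|_2\le\epsilon$; it is $(\alpha,\mathcal{F})$-effective if $\Pr(\mathcal{F}(\mathcal{A}_T(x))=y_t)\ge1-\alpha$. Upper loss gradient similarity: $\overline{\mathcal{S}}(\ell_{\mathcal{F}},\ell_{\mathcal{G}})=\sup_{x\in\mathcal{X},y\in\mathcal{Y}}\frac{\nabla_x\ell_{\mathcal{F}}(x,y)\cdot\nabla_x\ell_{\mathcal{G}}(x,y)}{\|\nabla_x\ell_{\mathcal{F}}(x,y)\|_2\|\nabla_x\ell_{\mathcal{G}}(x,y)\|_2}$. Targeted transferability at benign $x$ with true label $y$: $T_r(\mathcal{F},\mathcal{G},x,y_t)=\mathbb{I}[\mathcal{F}(x)=\mathcal{G}(x)=y\ \wedge\ \mathcal{F}(\mathcal{A}_T(x))=\mathcal{G}(\mathcal{A}_T(x))=y_t]$. *)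

theory Defs
  imports "HOL-Probability.Probability"
begin

definition is_input_gradient :: "('x::euclidean_space \<Rightarrow> 'y \<Rightarrow> real) \<Rightarrow> ('x \<Rightarrow> 'y \<Rightarrow> 'x) \<Rightarrow> bool" where
  "is_input_gradient l g \<longleftrightarrow>
     (\<forall>x y. ((\<lambda>z. l z y) has_derivative (\<lambda>h. g x y \<bullet> h)) (at x))"

definition beta_smooth :: "real \<Rightarrow> ('x::euclidean_space \<Rightarrow> 'y \<Rightarrow> 'x) \<Rightarrow> bool" where
  "beta_smooth \<beta> g \<longleftrightarrow>
     (\<forall>x1 x2 y. x1 \<noteq> x2 \<longrightarrow> norm (g x1 y - g x2 y) / norm (x1 - x2) \<le> \<beta>)"

definition upper_grad_sim :: "('x::euclidean_space \<Rightarrow> 'y \<Rightarrow> 'x) \<Rightarrow> ('x \<Rightarrow> 'y \<Rightarrow> 'x) \<Rightarrow> real" where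
  "upper_grad_sim gF gG =
     (SUP p\<in>(UNIV :: ('x \<times> 'y) set).
        (gF (fst p) (snd p) \<bullet> gG (fst p) (snd p)) /
        (norm (gF (fst p) (snd p)) * norm (gG (fst p) (snd p))))"

definition emp_risk :: "('x \<times> 'y) measure \<Rightarrow> ('x \<Rightarrow> 'y \<Rightarrow> real) \<Rightarrow> real" where
  "emp_risk D l = (\<integral>p. l (fst p) (snd p) \<partial>D)"

definition is_argmin_model :: "('x \<Rightarrow> 'y) \<Rightarrow> ('x \<Rightarrow> 'y \<Rightarrow> real) \<Rightarrow> bool" where
  "is_argmin_model F l \<longleftrightarrow> (\<forall>x y. l x (F x) \<le> l x y)"

definition targeted_attack :: "real \<Rightarrow> ('x::real_normed_vector \<Rightarrow> 'x) \<Rightarrow> bool" where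
  "targeted_attack \<epsilon> A \<longleftrightarrow> (\<forall>x. norm (A x - x) \<le> \<epsilon>)"

definition effective_attack ::
  "('x \<times> 'y) measure \<Rightarrow> real \<Rightarrow> ('x \<Rightarrow> 'y) \<Rightarrow> ('x \<Rightarrow> 'x) \<Rightarrow> 'y \<Rightarrow> bool" where
  "effective_attack D \<alpha> F A yt \<longleftrightarrow>
     prob_space.prob D {p \<in> space D. F (A (fst p)) = yt} \<ge> 1 - \<alpha>"

definition transferability ::
  "('x \<Rightarrow> 'y) \<Rightarrow> ('x \<Rightarrow> 'y) \<Rightarrow> ('x \<Rightarrow> 'x) \<Rightarrow> 'x \<Rightarrow> 'y \<Rightarrow> 'y \<Rightarrow> real" where
  "transferability F G A x y yt =
     (if F x = y \<and> G x = y \<and> F (A x) = yt \<and> G (A x) = yt then 1 else 0)"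

definition l_min :: "('x \<Rightarrow> 'y \<Rightarrow> real) \<Rightarrow> ('x \<Rightarrow> 'y \<Rightarrow> real) \<Rightarrow> 'y \<Rightarrow> real" where
  "l_min lF lG yt = (INF x. min (lF x yt) (lG x yt))"

end

theory Submission
  imports Defs
begin

text \<open>On the transfer event both models send the attacked input A x to the target label,
  so yt minimises the loss at A x and the loss of the true label y at A x is at least
  l_min. The loss is B-Lipschitz in the input and A x is within \<epsilon> of x, hence
  lF x y \<ge> l_min - \<epsilon> B. The similarity and smoothness terms of the denominator are
  nonnegative, so the denominator is at most l_min - \<epsilon> B, and Markov's inequality
  for lF + lG yields the bound.\<close>

lemma cosine_le_1:
  fixes a b :: "'a::real_inner"
  shows "\<bar>(a \<bullet> b) / (norm a * norm b)\<bar> \<le> 1"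
proof (cases "norm a * norm b = 0")
  case False
  then have "norm a * norm b > 0" by (simp add: zero_less_mult_iff)
  with Cauchy_Schwarz_ineq2[of a b] show ?thesis by (simp add: abs_divide divide_le_eq_1)
qed auto

lemma upper_grad_sim_ge_neg1: "-1 \<le> upper_grad_sim gF gG"
proof -
  let ?cos = "\<lambda>p. (gF (fst p) (snd p) \<bullet> gG (fst p) (snd p)) /
        (norm (gF (fst p) (snd p)) * norm (gG (fst p) (snd p)))"
  have bdd: "bdd_above (range ?cos)"
    by (rule bdd_aboveI[where M=1]) (use cosine_le_1 abs_le_D1 in blast)
  have "\<bar>?cos undefined\<bar> \<le> 1" by (rule cosine_le_1)
  then have "-1 \<le> ?cos undefined" by linarith
  also have "\<dots> \<le> upper_grad_sim gF gG"
    unfolding upper_grad_sim_def by (rule cSUP_upper[OF _ bdd]) simp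
  finally show ?thesis .
qed

lemma beta_smooth_nonneg:
  fixes g :: "'x::euclidean_space \<Rightarrow> 'y \<Rightarrow> 'x"
  assumes "beta_smooth \<beta> g"
  shows "0 \<le> \<beta>"
proof -
  obtain v :: 'x where "v \<noteq> 0" using nonzero_Basis by blast
  with assms have "norm (g v y - g 0 y) / norm (v - 0) \<le> \<beta>"
    unfolding beta_smooth_def by blast
  then show ?thesis by (meson divide_nonneg_nonneg norm_ge_zero order_trans)
qed

lemma targeted_attack_radius_nonneg: "targeted_attack \<epsilon> A \<Longrightarrow> 0 \<le> \<epsilon>"
  unfolding targeted_attack_def by (meson norm_ge_zero order_trans)

lemma uniform_norm_bound_nonneg: "\<forall>x y. norm (g x y) \<le> B \<Longrightarrow> 0 \<le> B"
  using norm_ge_zero order_trans by blast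

lemma input_gradient_lipschitz:
  fixes l :: "'x::euclidean_space \<Rightarrow> 'y \<Rightarrow> real"
  assumes "is_input_gradient l g" and "\<forall>x y. norm (g x y) \<le> B"
  shows "\<bar>l a y - l b y\<bar> \<le> B * norm (a - b)"
proof -
  have "norm (l a y - l b y) \<le> B * norm (a - b)"
  proof (rule differentiable_bound[where S=UNIV and f="\<lambda>z. l z y" and f'="\<lambda>x h. g x y \<bullet> h"])
    fix x :: 'x
    show "((\<lambda>z. l z y) has_derivative (\<lambda>h. g x y \<bullet> h)) (at x within UNIV)"
      using assms(1) unfolding is_input_gradient_def by simp
    from uniform_norm_bound_nonneg[OF assms(2)] show "onorm (\<lambda>h. g x y \<bullet> h) \<le> B"
    proof (rule onorm_bound)
      fix h :: 'x
      have "norm (g x y \<bullet> h) \<le> norm (g x y) * norm h" by (simp add: Cauchy_Schwarz_ineq2)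
      also have "\<dots> \<le> B * norm h" using assms(2) by (simp add: mult_right_mono)
      finally show "norm (g x y \<bullet> h) \<le> B * norm h" .
    qed
  qed auto
  then show ?thesis by simp
qed

lemma l_min_le:
  assumes "\<forall>x y. lF x y \<ge> 0" and "\<forall>x y. lG x y \<ge> 0"
  shows "l_min lF lG yt \<le> lF x yt" and "l_min lF lG yt \<le> lG x yt"
proof -
  have "bdd_below (range (\<lambda>x. min (lF x yt) (lG x yt)))"
    using assms by (intro bdd_belowI[where m=0]) auto
  then have "l_min lF lG yt \<le> min (lF x yt) (lG x yt)"
    unfolding l_min_def by (rule cINF_lower) simp
  then show "l_min lF lG yt \<le> lF x yt" and "l_min lF lG yt \<le> lG x yt" by simp_all
qed

lemma attacked_argmin_loss_lower_bound:
  assumes "is_argmin_model F l" and "is_input_gradient l g" and "\<forall>x y. norm (g x y) \<le> B"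
    and "targeted_attack \<epsilon> A" and "F (A x) = yt" and "\<forall>z. m \<le> l z yt"
  shows "m - B * \<epsilon> \<le> l x y"
proof -
  from uniform_norm_bound_nonneg[OF assms(3)] have "B * norm (A x - x) \<le> B * \<epsilon>"
    using assms(4) unfolding targeted_attack_def by (simp add: mult_left_mono)
  then have "l (A x) y \<le> l x y + B * \<epsilon>"
    using input_gradient_lipschitz[OF assms(2,3), of "A x" y x] by linarith
  moreover have "l (A x) yt \<le> l (A x) y"
    using assms(1,5) unfolding is_argmin_model_def by metis
  moreover have "m \<le> l (A x) yt" using assms(6) by blast
  ultimately show ?thesis by linarith
qed

text \<open>Markov's inequality for an event that need not be measurable.\<close>
lemma (in finite_measure) measure_le_integral_div:
  fixes u :: "'a \<Rightarrow> real"
  assumes "integrable M u" and "\<And>x. x \<in> space M \<Longrightarrow> 0 \<le> u x" and "0 < c"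
    and "E \<subseteq> space M" and "\<And>x. x \<in> E \<Longrightarrow> c \<le> u x"
  shows "measure M E \<le> (\<integral>x. u x \<partial>M) / c"
proof (cases "E \<in> sets M")
  case True
  have "u \<in> borel_measurable M" using assms(1) by blast
  then have "{x \<in> space M. c \<le> u x} \<in> sets M" by measurable
  moreover have "E \<subseteq> {x \<in> space M. c \<le> u x}" using assms(4,5) by blast
  ultimately have "measure M E \<le> measure M {x \<in> space M. c \<le> u x}"
    by (intro finite_measure_mono)
  also have "\<dots> \<le> (\<integral>x. u x \<partial>M) / c"
    using assms(1-3) by (intro integral_Markov_inequality_measure[where A="space M"]) auto
  finally show ?thesis .
next
  case False
  have "0 \<le> (\<integral>x. u x \<partial>M)" using assms(2) by (rule integral_nonneg_AE[OF AE_I2])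
  with False \<open>0 < c\<close> show ?thesis by (simp add: measure_notin_sets)
qed

theorem theorem3:
  fixes D :: "('x::euclidean_space \<times> 'y::finite) measure"
    and lF lG :: "'x \<Rightarrow> 'y \<Rightarrow> real"
    and gF gG :: "'x \<Rightarrow> 'y \<Rightarrow> 'x"
    and F G :: "'x \<Rightarrow> 'y"
    and A :: "'x \<Rightarrow> 'x"
    and yt :: 'y
    and \<alpha> \<beta> B \<epsilon> :: real
  assumes "prob_space D"
    and "integrable D (\<lambda>p. lF (fst p) (snd p))"
    and "integrable D (\<lambda>p. lG (fst p) (snd p))"
    and "\<forall>x y. lF x y \<ge> 0" and "\<forall>x y. lG x y \<ge> 0"
    and "is_input_gradient lF gF" and "is_input_gradient lG gG"
    and "is_argmin_model F lF" and "is_argmin_model G lG"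
    and "beta_smooth \<beta> gF" and "beta_smooth \<beta> gG"
    and "\<forall>x y. norm (gF x y) \<le> B" and "\<forall>x y. norm (gG x y) \<le> B"
    and "targeted_attack \<epsilon> A"
    and "effective_attack D \<alpha> F A yt"
    and "l_min lF lG yt - \<epsilon> * B * (1 + sqrt ((1 + upper_grad_sim gF gG) / 2)) - \<beta> * \<epsilon>\<^sup>2 > 0"
  shows "prob_space.prob D {p \<in> space D. transferability F G A (fst p) (snd p) yt = 1}
     \<le> (emp_risk D lF + emp_risk D lG) /
        (l_min lF lG yt - \<epsilon> * B * (1 + sqrt ((1 + upper_grad_sim gF gG) / 2)) - \<beta> * \<epsilon>\<^sup>2)"
proof -
  interpret prob_space D by fact
  define K where "K = l_min lF lG yt - \<epsilon> * B * (1 + sqrt ((1 + upper_grad_sim gF gG) / 2)) - \<beta> * \<epsilon>\<^sup>2"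
  have "0 \<le> \<epsilon> * B * sqrt ((1 + upper_grad_sim gF gG) / 2) + \<beta> * \<epsilon>\<^sup>2"
    using targeted_attack_radius_nonneg[OF assms(14)] uniform_norm_bound_nonneg[OF assms(12)]
      upper_grad_sim_ge_neg1[of gF gG] beta_smooth_nonneg[OF assms(10)] by simp
  then have K_le: "K \<le> l_min lF lG yt - B * \<epsilon>"
    unfolding K_def by (simp add: algebra_simps)
  have transfer_loss: "K \<le> lF x y + lG x y" if "transferability F G A x y yt = 1" for x y
  proof -
    have "F (A x) = yt" using that unfolding transferability_def by (auto split: if_splits)
    then have "l_min lF lG yt - B * \<epsilon> \<le> lF x y"
      using attacked_argmin_loss_lower_bound[OF assms(8,6,12,14)] l_min_le(1)[OF assms(4,5)] by blast
    moreover have "0 \<le> lG x y" using assms(5) by blast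
    ultimately show ?thesis using K_le by linarith
  qed
  have "prob {p \<in> space D. transferability F G A (fst p) (snd p) yt = 1}
      \<le> (\<integral>p. lF (fst p) (snd p) + lG (fst p) (snd p) \<partial>D) / K"
    using assms(2-5) assms(16)[folded K_def] transfer_loss
    by (intro measure_le_integral_div) (auto intro: add_nonneg_nonneg)
  then show ?thesis
    unfolding K_def emp_risk_def using assms(2,3) by simp
qed

end
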